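(* In the setting below, for every $w\in W_M^Q$, \[ \mathrm{codim}(C_w)-\mathrm{codim}(C_w^M) = (\chi_w-\chi_w^M)(x_P). \]
   Context: $G=\mathrm{Sp}(2r)$ acting on $V=\mathbb{C}^{2r}$ with basis $e_1,\ldots,e_r,e_r',\ldots,e_1'$, symplectic form $(e_i,e_j')=\delta_{ij}$, $(e_i,e_j)=(e_i',e_j')=0$; $T$ diagonal torus $\mathrm{diag}(a_1,\ldots,a_r,a_r^{-1},\ldots,a_1^{-1})$ with characters $\epsilon_i$; positive roots $R^+$: $\epsilon_i-\epsilon_j$ ($i<j$), $\epsilon_i+\epsilon_j$ ($i\le j$); simple roots $\alpha_i=\epsilon_i-\epsilon_{i+1}$ ($i<r$), $\alpha_r=2\epsilon_r$; $x_1,\ldots,x_r\in\mathfrak{h}$ the basis dual to $\alpha_1,\ldots,\alpha_r$. Fix $1\le k\le s<r$; $M=C_G(\tau)\cong\mathrm{Sp}(2s)\times\mathrm{Sp}(2(r-s))$ with $\tau=\mathrm{diag}(-1,\ldots,-1,1,\ldots,1,-1,\ldots,-1)$ ($2(r-s)$ entries $1$); roots $R_M$ of $M$ are roots $\alpha$ of $G$ with $\alpha(\tau)=1$, $R_M^+=R_M\cap R^+$. $P$ is the maximal parabolic containing $B$ associated to $\alpha_P=\alpha_k$, $x_P=x_k$, $L$ its Levi containing $T$ with positive roots $R_L^+$, $Q=M\cap P$, $W_M^Q\subseteq W^P$ minimal coset representatives. $C_w=BwP/P\subseteq G/P$ and $C_w^M=(B\cap M)wQ/Q\subseteq M/Q$.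 $\chi_w=\sum_{\beta\in(R^+\setminus R^+_L)\cap w^{-1}R^+}\beta$ and $\chi^M_w$ is the same sum restricted to roots of $M$. *)

theory Defs
  imports Complex_Main
begin

text \<open>Weights (characters of the diagonal torus T of Sp(2r)) are encoded as
  functions nat => int: the character sum_i lambda(i) eps_i, indices 1..r;
  coordinates outside 1..r are irrelevant junk.\<close>

type_synonym weight = "nat \<Rightarrow> int"

definition eps :: "nat \<Rightarrow> weight" where
  "eps i = (\<lambda>j. if j = i then 1 else 0)"

definition restr :: "nat \<Rightarrow> weight \<Rightarrow> weight" where
  "restr r l = (\<lambda>j. if j \<in> {1..r} then l j else 0)"

definition dotp :: "nat \<Rightarrow> weight \<Rightarrow> weight \<Rightarrow> int" where
  "dotp r l m = (\<Sum>j\<in>{1..r}. l j * m j)"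

definition refl :: "nat \<Rightarrow> weight \<Rightarrow> weight \<Rightarrow> weight" where
  "refl r a l = (\<lambda>j. if j \<in> {1..r}
       then l j - (2 * dotp r l a div dotp r a a) * a j else 0)"

definition pos_roots :: "nat \<Rightarrow> weight set" where
  "pos_roots r = {(\<lambda>n. eps i n - eps j n) | i j. 1 \<le> i \<and> i < j \<and> j \<le> r}
               \<union> {(\<lambda>n. eps i n + eps j n) | i j. 1 \<le> i \<and> i \<le> j \<and> j \<le> r}"

definition neg_roots :: "nat \<Rightarrow> weight set" where
  "neg_roots r = (\<lambda>b n. - b n) ` pos_roots r"

definition alpha :: "nat \<Rightarrow> nat \<Rightarrow> weight" where
  "alpha r i = (if i < r then (\<lambda>n. eps i n - eps (Suc i) n) else (\<lambda>n. 2 * eps r n))"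

text \<open>As all groups involved
  are finite, the generated monoid is the generated group.\<close>
inductive_set gen_grp :: "nat \<Rightarrow> (weight \<Rightarrow> weight) set \<Rightarrow> (weight \<Rightarrow> weight) set"
  for r S where
  unit: "restr r \<in> gen_grp r S"
| step: "s \<in> S \<Longrightarrow> w \<in> gen_grp r S \<Longrightarrow> s \<circ> w \<in> gen_grp r S"

definition weylW :: "nat \<Rightarrow> (weight \<Rightarrow> weight) set" where
  "weylW r = gen_grp r {refl r (alpha r i) | i. 1 \<le> i \<and> i \<le> r}"

text \<open>Weyl group W_L of the Levi L of P (alpha_P = alpha_k): generated by
  the simple reflections s_i, i \<noteq> k.\<close>
definition weylL :: "nat \<Rightarrow> nat \<Rightarrow> (weight \<Rightarrow> weight) set" where
  "weylL r k = gen_grp r {refl r (alpha r i) | i. 1 \<le> i \<and> i \<le> r \<and> i \<noteq> k}"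

text \<open>The element x_k of h, dual to the simple roots: x_k(alpha_i) = delta_ik
  (for k < r), applied to a weight.\<close>
definition xP :: "nat \<Rightarrow> weight \<Rightarrow> int" where
  "xP k l = (\<Sum>j\<in>{1..k}. l j)"

text \<open>Evaluation of a character on the torus element diag(a_1..a_r, a_r^-1..a_1^-1).\<close>
definition torus_char :: "nat \<Rightarrow> (nat \<Rightarrow> complex) \<Rightarrow> weight \<Rightarrow> complex" where
  "torus_char r a l = (\<Prod>i\<in>{1..r}. a i powi l i)"

definition tau :: "nat \<Rightarrow> nat \<Rightarrow> complex" where
  "tau s i = (if i \<le> s then -1 else 1)"

definition pos_rootsM :: "nat \<Rightarrow> nat \<Rightarrow> weight set" where
  "pos_rootsM r s = {\<beta> \<in> pos_roots r. torus_char r (tau s) \<beta> = 1}"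

text \<open>R_L^+ : positive roots in the span of the simple roots other than alpha_k.\<close>
definition pos_rootsL :: "nat \<Rightarrow> nat \<Rightarrow> weight set" where
  "pos_rootsL r k = {\<beta> \<in> pos_roots r. xP k \<beta> = 0}"

text \<open>W_M = N_M(T)/T = stabiliser of tau in W (M = C_G(tau)).\<close>
definition weylM :: "nat \<Rightarrow> nat \<Rightarrow> (weight \<Rightarrow> weight) set" where
  "weylM r s = {w \<in> weylW r. \<forall>l. torus_char r (tau s) (w l) = torus_char r (tau s) l}"

text \<open>W_Q = Weyl group of the Levi L \<inter> M of Q = M \<inter> P.\<close>
definition weylQ :: "nat \<Rightarrow> nat \<Rightarrow> nat \<Rightarrow> (weight \<Rightarrow> weight) set" where
  "weylQ r s k = weylM r s \<inter> weylL r k"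

definition len :: "nat \<Rightarrow> (weight \<Rightarrow> weight) \<Rightarrow> nat" where
  "len r w = card {\<beta> \<in> pos_roots r. w \<beta> \<in> neg_roots r}"

definition lenM :: "nat \<Rightarrow> nat \<Rightarrow> (weight \<Rightarrow> weight) \<Rightarrow> nat" where
  "lenM r s w = card {\<beta> \<in> pos_rootsM r s. w \<beta> \<in> neg_roots r}"

definition weylMQ :: "nat \<Rightarrow> nat \<Rightarrow> nat \<Rightarrow> (weight \<Rightarrow> weight) set" where
  "weylMQ r s k = {w \<in> weylM r s. \<forall>v \<in> weylQ r s k. lenM r s w \<le> lenM r s (w \<circ> v)}"

text \<open>dim C_w = dim BwP/P = length of the minimal representative of w W_L;
  dim G/P = |R^+ - R_L^+|. Analogously for C_w^M in M/Q.\<close>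
definition dim_cell :: "nat \<Rightarrow> nat \<Rightarrow> (weight \<Rightarrow> weight) \<Rightarrow> nat" where
  "dim_cell r k w = (LEAST n. \<exists>v \<in> weylL r k. n = len r (w \<circ> v))"

definition codim_cell :: "nat \<Rightarrow> nat \<Rightarrow> (weight \<Rightarrow> weight) \<Rightarrow> nat" where
  "codim_cell r k w = card (pos_roots r - pos_rootsL r k) - dim_cell r k w"

definition dim_cellM :: "nat \<Rightarrow> nat \<Rightarrow> nat \<Rightarrow> (weight \<Rightarrow> weight) \<Rightarrow> nat" where
  "dim_cellM r s k w = (LEAST n. \<exists>v \<in> weylQ r s k. n = lenM r s (w \<circ> v))"

definition codim_cellM :: "nat \<Rightarrow> nat \<Rightarrow> nat \<Rightarrow> (weight \<Rightarrow> weight) \<Rightarrow> nat" where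
  "codim_cellM r s k w =
     card (pos_rootsM r s - pos_rootsL r k) - dim_cellM r s k w"

definition chi :: "nat \<Rightarrow> nat \<Rightarrow> (weight \<Rightarrow> weight) \<Rightarrow> weight" where
  "chi r k w = (\<lambda>j. \<Sum>\<beta> \<in> {\<beta> \<in> pos_roots r - pos_rootsL r k. w \<beta> \<in> pos_roots r}. \<beta> j)"

definition chiM :: "nat \<Rightarrow> nat \<Rightarrow> nat \<Rightarrow> (weight \<Rightarrow> weight) \<Rightarrow> weight" where
  "chiM r s k w = (\<lambda>j. \<Sum>\<beta> \<in> {\<beta> \<in> pos_rootsM r s - pos_rootsL r k. w \<beta> \<in> pos_roots r}. \<beta> j)"

lemma xP_alpha:
  assumes "k < r" "1 \<le> i" "i \<le> r"
  shows "xP k (alpha r i) = (if i = k then 1 else 0)"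
proof (cases "i < r")
  case True
  have "xP k (alpha r i) = (\<Sum>j\<in>{1..k}. eps i j) - (\<Sum>j\<in>{1..k}. eps (Suc i) j)"
    using True by (simp add: xP_def alpha_def sum_subtractf)
  also have "\<dots> = (if i \<le> k then 1 else 0) - (if Suc i \<le> k then 1 else 0)"
    using assms by (simp add: eps_def)
  finally show ?thesis by auto
next
  case False
  then show ?thesis using assms by (simp add: xP_def alpha_def eps_def)
qed

end

theory Submission
  imports Defs "HOL-Combinatorics.Transposition"
begin

text \<open>
  Every element of \<open>W\<close> acts on weights as a signed permutation of \<open>\<epsilon>\<^sub>1, ..., \<epsilon>\<^sub>r\<close>, and a
  root is positive iff its pairing with the Weyl vector \<open>\<rho> = \<Sum>\<^sub>j (r + 1 - j) \<epsilon>\<^sub>j\<close> is positive.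
  For \<open>w \<in> W\<^sub>M\<^sup>Q\<close>, minimality in \<open>w W\<^sub>Q\<close> forces \<open>w\<close> to keep the simple roots of \<open>L \<inter> M\<close>
  positive: \<open>\<alpha>\<^sub>i\<close> for \<open>i \<noteq> k, s\<close>, and \<open>2\<epsilon>\<^sub>s\<close> if \<open>k < s\<close>. Hence \<open>a \<mapsto> \<langle>\<rho>, w \<epsilon>\<^sub>a\<rangle>\<close> decreases on
  each of the blocks \<open>[1, k]\<close>, \<open>(k, s]\<close>, \<open>(s, r]\<close> and is positive at \<open>s\<close> (if \<open>k < s\<close>) and at \<open>r\<close>;
  since \<open>W\<^sub>M\<close> preserves \<open>{1..s}\<close>, its values on \<open>(s, r]\<close> lie below each positive value on
  \<open>[1, s]\<close>. Together this gives \<open>w R\<^sub>L\<^sup>+ \<subseteq> R\<^sup>+\<close>. As \<open>W\<^sub>L\<close> permutes \<open>R\<^sup>+ - R\<^sub>L\<^sup>+\<close> and \<open>W\<^sub>Q\<close>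
  permutes \<open>R\<^sub>M\<^sup>+ - R\<^sub>L\<^sup>+\<close>, both cells have as dimension the number of roots there that \<open>w\<close>
  makes negative, so the codimensions count the roots made positive. Their difference counts
  the roots \<open>\<beta> \<in> R\<^sup>+ - R\<^sub>L\<^sup>+\<close> outside \<open>M\<close> with \<open>w \<beta> > 0\<close>, and each of them has \<open>x\<^sub>P(\<beta>) = 1\<close>.
\<close>

lemma sum_mult_eps [simp]:
  "finite A \<Longrightarrow> (\<Sum>j\<in>A. l j * eps a j) = (if a \<in> A then l a else 0)"
  by (simp add: eps_def if_distrib[of "\<lambda>x. _ * x"] sum.delta cong: if_cong)

lemma sum_eps: "finite A \<Longrightarrow> (\<Sum>j\<in>A. eps a j) = (if a \<in> A then 1 else 0)"
  using sum_mult_eps[of A "\<lambda>_. 1" a] by simp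

definition eps2 :: "int \<Rightarrow> nat \<Rightarrow> int \<Rightarrow> nat \<Rightarrow> weight" where
  "eps2 c x d y = (\<lambda>n. c * eps x n + d * eps y n)"

lemma eps2_uminus: "(\<lambda>n. - eps2 c x d y n) = eps2 (-c) x (-d) y"
  by (simp add: eps2_def fun_eq_iff)

lemma eps2_commute: "eps2 c x d y = eps2 d y c x"
  by (simp add: eps2_def fun_eq_iff)

lemma restr_eps2: "x \<in> {1..r} \<Longrightarrow> y \<in> {1..r} \<Longrightarrow> restr r (eps2 c x d y) = eps2 c x d y"
  by (auto simp: restr_def eps2_def fun_eq_iff eps_def)

lemma xP_eps: "xP m (eps x) = (if x \<in> {1..m} then 1 else 0)"
  by (simp add: xP_def sum_eps)

lemma xP_eps2:
  "xP m (eps2 c x d y) = c * (if x \<in> {1..m} then 1 else 0) + d * (if y \<in> {1..m} then 1 else 0)"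
  by (simp add: xP_def eps2_def sum.distrib sum_distrib_left[symmetric] sum_eps)

lemma xP_mult: "xP m (\<lambda>n. c * f n) = c * xP m f"
  by (simp add: xP_def sum_distrib_left)

lemma xP_sum: "xP m (\<lambda>j. \<Sum>b\<in>B. b j) = (\<Sum>b\<in>B. xP m b)"
  unfolding xP_def by (rule sum.swap)

lemma xP_restr: "m \<le> r \<Longrightarrow> xP m (restr r l) = xP m l"
  unfolding xP_def restr_def by (rule sum.cong) auto

lemma pos_roots_eq:
  "pos_roots r = {eps2 1 i (-1) j | i j. 1 \<le> i \<and> i < j \<and> j \<le> r}
               \<union> {eps2 1 i 1 j | i j. 1 \<le> i \<and> i \<le> j \<and> j \<le> r}"
proof -
  have "(\<lambda>n. eps i n - eps j n) = eps2 1 i (-1) j" "(\<lambda>n. eps i n + eps j n) = eps2 1 i 1 j" for i j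
    by (simp_all add: eps2_def fun_eq_iff)
  then show ?thesis unfolding pos_roots_def by simp
qed

lemma pos_rootsE:
  assumes "b \<in> pos_roots r"
  obtains a e d where "1 \<le> a" "a \<le> d" "d \<le> r" "e = 1 \<or> (e = -1 \<and> a < d)" "b = eps2 1 a e d"
  using assms unfolding pos_roots_eq
proof (elim UnE CollectE exE conjE)
  fix i j assume "b = eps2 1 i (-1) j" "1 \<le> i" "i < j" "j \<le> r"
  then show thesis by (intro that[of i j "-1"]) auto
next
  fix i j assume "b = eps2 1 i 1 j" "1 \<le> i" "i \<le> j" "j \<le> r"
  then show thesis by (intro that[of i j 1]) auto
qed

lemma pos_rootsI:
  "1 \<le> a \<Longrightarrow> a \<le> d \<Longrightarrow> d \<le> r \<Longrightarrow> e = 1 \<or> (e = -1 \<and> a < d) \<Longrightarrow> eps2 1 a e d \<in> pos_roots r"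
  unfolding pos_roots_eq by blast

lemma finite_pos_roots: "finite (pos_roots r)"
proof (rule finite_subset)
  show "pos_roots r \<subseteq> (\<lambda>(a, e, d). eps2 1 a e d) ` ({1..r} \<times> {-1, 1} \<times> {1..r})"
    by (force elim: pos_rootsE)
qed simp

lemma restr_pos_root: "b \<in> pos_roots r \<Longrightarrow> restr r b = b"
  by (erule pos_rootsE) (simp add: restr_eps2)

lemma neg_rootsI: "b \<in> pos_roots r \<Longrightarrow> (\<lambda>n. - b n) \<in> neg_roots r"
  unfolding neg_roots_def by blast

lemma neg_rootsD: "b \<in> neg_roots r \<Longrightarrow> (\<lambda>n. - b n) \<in> pos_roots r"
  unfolding neg_roots_def by auto

lemma alpha_eq_eps2:
  shows alpha_lt_eq_eps2: "i < r \<Longrightarrow> alpha r i = eps2 1 i (-1) (Suc i)"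
    and alpha_last_eq_eps2: "alpha r r = eps2 1 r 1 r"
  by (simp_all add: alpha_def eps2_def fun_eq_iff)

lemma alpha_pos_root: "1 \<le> i \<Longrightarrow> i \<le> r \<Longrightarrow> alpha r i \<in> pos_roots r"
  by (cases "i < r") (simp_all add: alpha_eq_eps2 pos_rootsI)

section \<open>Positivity via the Weyl vector\<close>

text \<open>Pairing with \<open>\<rho> = \<Sum>\<^sub>j (r + 1 - j) \<epsilon>\<^sub>j\<close>, half the sum of the positive roots.\<close>

definition dot_rho :: "nat \<Rightarrow> weight \<Rightarrow> int" where
  "dot_rho r b = (\<Sum>j\<in>{1..r}. int (Suc r - j) * b j)"

lemma dot_rho_eps2:
  assumes "x \<in> {1..r}" "y \<in> {1..r}"
  shows "dot_rho r (eps2 c x d y) = c * int (Suc r - x) + d * int (Suc r - y)"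
proof -
  have "dot_rho r (eps2 c x d y)
      = c * (\<Sum>j\<in>{1..r}. int (Suc r - j) * eps x j) + d * (\<Sum>j\<in>{1..r}. int (Suc r - j) * eps y j)"
    unfolding dot_rho_def eps2_def sum_distrib_left sum.distrib[symmetric] by (simp add: algebra_simps)
  then show ?thesis using assms by simp
qed

lemma dot_rho_uminus: "dot_rho r (\<lambda>n. - b n) = - dot_rho r b"
  by (simp add: dot_rho_def sum_negf)

lemma dot_rho_pos_root: "b \<in> pos_roots r \<Longrightarrow> 0 < dot_rho r b"
  by (erule pos_rootsE) (auto simp: dot_rho_eps2 of_nat_diff)

lemma dot_rho_neg_root: "b \<in> neg_roots r \<Longrightarrow> dot_rho r b < 0"
  using dot_rho_pos_root[OF neg_rootsD] by (fastforce simp: dot_rho_uminus)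

lemma pos_root_not_neg_root: "b \<in> pos_roots r \<Longrightarrow> b \<notin> neg_roots r"
  using dot_rho_pos_root dot_rho_neg_root by fastforce

lemma pos_root_iff_dot_rho:
  "b \<in> pos_roots r \<union> neg_roots r \<Longrightarrow> b \<in> pos_roots r \<longleftrightarrow> 0 < dot_rho r b"
  using dot_rho_pos_root dot_rho_neg_root by fastforce

lemma uminus_root: "b \<in> pos_roots r \<union> neg_roots r \<Longrightarrow> (\<lambda>n. - b n) \<in> pos_roots r \<union> neg_roots r"
  by (auto dest: neg_rootsD neg_rootsI)

lemma eps2_one_root:
  assumes "x \<in> {1..r}" "y \<in> {1..r}" "e = 1 \<or> (e = -1 \<and> x \<noteq> y)"
  shows "eps2 1 x e y \<in> pos_roots r \<union> neg_roots r"
proof (cases "x \<le> y")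
  case True
  then show ?thesis using assms by (auto intro: pos_rootsI)
next
  case False
  then have "eps2 1 y e x \<in> pos_roots r" using assms by (auto intro: pos_rootsI)
  then show ?thesis
    using assms(3) uminus_root[of "eps2 1 y (-1) x" r] by (auto simp: eps2_commute eps2_uminus)
qed

lemma eps2_root:
  assumes "x \<in> {1..r}" "y \<in> {1..r}" "c \<in> {1, -1}" "d \<in> {1, -1}" "x \<noteq> y \<or> c = d"
  shows "eps2 c x d y \<in> pos_roots r \<union> neg_roots r"
proof (cases "c = 1")
  case True
  then show ?thesis using assms eps2_one_root by auto
next
  case False
  then have "c = -1" using assms(3) by simp
  moreover have "eps2 1 x (-d) y \<in> pos_roots r \<union> neg_roots r"
    using assms \<open>c = -1\<close> by (intro eps2_one_root) auto
  ultimately show ?thesis using uminus_root by (fastforce simp: eps2_uminus)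
qed

section \<open>Weyl group elements as signed permutations\<close>

definition signed_perm :: "nat \<Rightarrow> (weight \<Rightarrow> weight) \<Rightarrow> (nat \<Rightarrow> nat) \<Rightarrow> (nat \<Rightarrow> int) \<Rightarrow> bool" where
  "signed_perm r w \<pi> c \<longleftrightarrow>
     (\<forall>f g. w (\<lambda>n. f n + g n) = (\<lambda>n. w f n + w g n)) \<and>
     (\<forall>x f. w (\<lambda>n. x * f n) = (\<lambda>n. x * w f n)) \<and>
     (\<forall>f. w (restr r f) = w f) \<and>
     \<pi> ` {1..r} \<subseteq> {1..r} \<and> inj_on \<pi> {1..r} \<and>
     (\<forall>a\<in>{1..r}. c a \<in> {1, -1} \<and> w (eps a) = (\<lambda>n. c a * eps (\<pi> a) n))"

lemma signed_perm_restr: "signed_perm r (restr r) id (\<lambda>_. 1)"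
  unfolding signed_perm_def by (auto simp: restr_def fun_eq_iff eps_def)

lemma signed_permD:
  assumes "signed_perm r w \<pi> c"
  shows signed_perm_add: "w (\<lambda>n. f n + g n) = (\<lambda>n. w f n + w g n)"
    and signed_perm_mult: "w (\<lambda>n. x * f n) = (\<lambda>n. x * w f n)"
    and signed_perm_restr_eq: "w (restr r f) = w f"
    and signed_perm_range: "a \<in> {1..r} \<Longrightarrow> \<pi> a \<in> {1..r}"
    and signed_perm_inj: "inj_on \<pi> {1..r}"
    and signed_perm_sign: "a \<in> {1..r} \<Longrightarrow> c a \<in> {1, -1}"
    and signed_perm_eps: "a \<in> {1..r} \<Longrightarrow> w (eps a) = (\<lambda>n. c a * eps (\<pi> a) n)"
  using assms unfolding signed_perm_def by blast+

lemma signed_perm_comp: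
  assumes s: "signed_perm r s \<pi>1 c1" and w: "signed_perm r w \<pi>2 c2"
  shows "signed_perm r (s \<circ> w) (\<pi>1 \<circ> \<pi>2) (\<lambda>a. c2 a * c1 (\<pi>2 a))"
  unfolding signed_perm_def
proof (intro conjI allI ballI)
  fix a :: nat assume a: "a \<in> {1..r}"
  have "(s \<circ> w) (eps a) = s (\<lambda>n. c2 a * eps (\<pi>2 a) n)" using signed_perm_eps[OF w a] by simp
  also have "\<dots> = (\<lambda>n. c2 a * c1 (\<pi>2 a) * eps ((\<pi>1 \<circ> \<pi>2) a) n)"
    using signed_perm_mult[OF s] signed_perm_eps[OF s signed_perm_range[OF w a]] by (simp add: mult.assoc)
  finally show "(s \<circ> w) (eps a) = (\<lambda>n. c2 a * c1 (\<pi>2 a) * eps ((\<pi>1 \<circ> \<pi>2) a) n)" .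
  show "c2 a * c1 (\<pi>2 a) \<in> {1, -1}"
    using signed_perm_sign[OF w a] signed_perm_sign[OF s signed_perm_range[OF w a]] by auto
next
  show "inj_on (\<pi>1 \<circ> \<pi>2) {1..r}"
    using signed_perm_inj[OF s] signed_perm_inj[OF w] signed_perm_range[OF w]
    by (blast intro: comp_inj_on inj_on_subset)
  show "(\<pi>1 \<circ> \<pi>2) ` {1..r} \<subseteq> {1..r}"
    using signed_perm_range[OF s] signed_perm_range[OF w] by auto
qed (simp_all add: signed_perm_add[OF s] signed_perm_add[OF w] signed_perm_mult[OF s]
       signed_perm_mult[OF w] signed_perm_restr_eq[OF w])

lemma signed_perm_gen_grp:
  assumes "\<And>s. s \<in> S \<Longrightarrow> \<exists>\<pi> c. signed_perm r s \<pi> c" "w \<in> gen_grp r S"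
  shows "\<exists>\<pi> c. signed_perm r w \<pi> c"
  using assms(2)
proof induction
  case unit
  then show ?case using signed_perm_restr by blast
next
  case (step s w)
  then show ?case using assms(1) signed_perm_comp by blast
qed

lemma signed_permI:
  assumes w: "\<And>l. w l = (\<lambda>j. if j \<in> {1..r} then d j * l (\<pi> j) else 0)"
    and \<pi>: "\<And>j. j \<in> {1..r} \<Longrightarrow> \<pi> j \<in> {1..r} \<and> \<pi> (\<pi> j) = j"
    and d: "\<And>j. j \<in> {1..r} \<Longrightarrow> d j \<in> {1, -1}"
  shows "signed_perm r w \<pi> (\<lambda>a. d (\<pi> a))"
proof -
  have "w (eps a) = (\<lambda>n. d (\<pi> a) * eps (\<pi> a) n)" if "a \<in> {1..r}" for a
  proof
    fix n
    have "n \<in> {1..r} \<and> \<pi> n = a \<longleftrightarrow> n = \<pi> a" using \<pi> that by metis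
    then show "w (eps a) n = d (\<pi> a) * eps (\<pi> a) n" by (auto simp: w eps_def)
  qed
  moreover have "inj_on \<pi> {1..r}" by (rule inj_on_inverseI[where g=\<pi>]) (use \<pi> in blast)
  ultimately show ?thesis
    using \<pi> d unfolding signed_perm_def by (auto simp: w restr_def fun_eq_iff algebra_simps)
qed

lemma signed_perm_eps2:
  assumes w: "signed_perm r w \<pi> c" and "x \<in> {1..r}" "y \<in> {1..r}"
  shows "w (eps2 c' x d' y) = eps2 (c' * c x) (\<pi> x) (d' * c y) (\<pi> y)"
  using assms unfolding eps2_def
  by (simp add: signed_perm_add[OF w] signed_perm_mult[OF w] signed_perm_eps[OF w] mult.assoc)

lemma signed_perm_uminus: "signed_perm r w \<pi> c \<Longrightarrow> w (\<lambda>n. - b n) = (\<lambda>n. - w b n)"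
  using signed_perm_mult[of r w \<pi> c "-1"] by simp

lemma signed_perm_eps2_root:
  assumes w: "signed_perm r w \<pi> c" and "1 \<le> a" "a \<le> d" "d \<le> r" "e = 1 \<or> (e = -1 \<and> a < d)"
  shows "w (eps2 1 a e d) = eps2 (c a) (\<pi> a) (e * c d) (\<pi> d)"
    and "w (eps2 1 a e d) \<in> pos_roots r \<union> neg_roots r"
proof -
  have ad: "a \<in> {1..r}" "d \<in> {1..r}" using assms by auto
  show eq: "w (eps2 1 a e d) = eps2 (c a) (\<pi> a) (e * c d) (\<pi> d)"
    using signed_perm_eps2[OF w ad] by simp
  have "\<pi> a \<in> {1..r}" "\<pi> d \<in> {1..r}" "c a \<in> {1, -1}" "c d \<in> {1, -1}"
    using ad signed_perm_range[OF w] signed_perm_sign[OF w] by blast+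
  moreover have "\<pi> a \<noteq> \<pi> d \<or> c a = e * c d"
    using ad assms(5) signed_perm_inj[OF w] by (cases "a = d") (auto dest: inj_onD)
  ultimately show "w (eps2 1 a e d) \<in> pos_roots r \<union> neg_roots r"
    unfolding eq using assms(5) by (intro eps2_root) auto
qed

lemma signed_perm_root:
  "signed_perm r w \<pi> c \<Longrightarrow> b \<in> pos_roots r \<Longrightarrow> w b \<in> pos_roots r \<union> neg_roots r"
  by (erule pos_rootsE) (metis signed_perm_eps2_root(2))

text \<open>Here \<open>c a * (r + 1 - \<pi> a)\<close> is \<open>dot_rho r (w \<epsilon>\<^sub>a)\<close>.\<close>

lemma signed_perm_pos_root_iff:
  assumes w: "signed_perm r w \<pi> c" and "1 \<le> a" "a \<le> d" "d \<le> r" "e = 1 \<or> (e = -1 \<and> a < d)"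
  shows "w (eps2 1 a e d) \<in> pos_roots r
           \<longleftrightarrow> 0 < c a * int (Suc r - \<pi> a) + e * (c d * int (Suc r - \<pi> d))"
proof -
  have "\<pi> a \<in> {1..r}" "\<pi> d \<in> {1..r}" using signed_perm_range[OF w] assms by auto
  then show ?thesis
    using pos_root_iff_dot_rho[OF signed_perm_eps2_root(2)[OF assms]]
    by (simp add: signed_perm_eps2_root(1)[OF assms] dot_rho_eps2 mult.assoc)
qed

text \<open>The reflection in the long root \<open>2\<epsilon>\<^sub>m\<close>.\<close>

definition sign_flip :: "nat \<Rightarrow> nat \<Rightarrow> weight \<Rightarrow> weight" where
  "sign_flip r m l = (\<lambda>j. if j \<in> {1..r} then (if j = m then - l j else l j) else 0)"

lemma refl_alpha_lt:
  assumes "1 \<le> i" "i < r"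
  shows "refl r (alpha r i) l = (\<lambda>j. if j \<in> {1..r} then l (transpose i (Suc i) j) else 0)"
proof -
  have dotp: "dotp r l (alpha r i) = l i - l (Suc i)" for l
    using assms by (simp add: alpha_def dotp_def right_diff_distrib sum_subtractf)
  have "dotp r (alpha r i) (alpha r i) = 2"
    using assms unfolding dotp by (simp add: alpha_def eps_def)
  then show ?thesis
    using assms unfolding refl_def dotp by (auto simp: alpha_def eps_def transpose_def fun_eq_iff)
qed

lemma refl_alpha_last:
  assumes "1 \<le> r"
  shows "refl r (alpha r r) = sign_flip r r"
proof -
  have dotp: "dotp r l (alpha r r) = 2 * l r" for l
    using assms by (simp add: alpha_def dotp_def mult.left_commute[of _ 2] flip: sum_distrib_left)
  have "dotp r (alpha r r) (alpha r r) = 4"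
    unfolding dotp by (simp add: alpha_def eps_def)
  then show ?thesis unfolding refl_def sign_flip_def dotp by (auto simp: alpha_def eps_def fun_eq_iff)
qed

lemma transpose_Suc_range: "1 \<le> i \<Longrightarrow> i < r \<Longrightarrow> j \<in> {1..r} \<Longrightarrow> transpose i (Suc i) j \<in> {1..r}"
  by (auto simp: transpose_def)

lemma signed_perm_refl_alpha_lt:
  assumes "1 \<le> i" "i < r"
  shows "signed_perm r (refl r (alpha r i)) (transpose i (Suc i)) (\<lambda>_. 1)"
proof (rule signed_permI[where d = "\<lambda>_. 1" and \<pi> = "transpose i (Suc i)"])
  show "refl r (alpha r i) l = (\<lambda>j. if j \<in> {1..r} then 1 * l (transpose i (Suc i) j) else 0)" for l
    using refl_alpha_lt[OF assms] by (simp add: fun_eq_iff)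
  show "transpose i (Suc i) j \<in> {1..r} \<and> transpose i (Suc i) (transpose i (Suc i) j) = j"
    if "j \<in> {1..r}" for j
    using transpose_Suc_range[OF assms that] by simp
qed simp

lemma signed_perm_sign_flip: "signed_perm r (sign_flip r m) id (\<lambda>a. if a = m then -1 else 1)"
proof -
  have "signed_perm r (sign_flip r m) id (\<lambda>a. (\<lambda>j. if j = m then -1 else 1) (id a))"
  proof (rule signed_permI)
    show "sign_flip r m l = (\<lambda>j. if j \<in> {1..r} then (if j = m then -1 else 1) * l (id j) else 0)" for l
      by (simp add: sign_flip_def fun_eq_iff)
  qed simp_all
  then show ?thesis by simp
qed

lemma signed_perm_weylW:
  assumes "w \<in> weylW r"
  obtains \<pi> c where "signed_perm r w \<pi> c"
proof -
  have "\<exists>\<pi> c. signed_perm r s \<pi> c" if s: "s \<in> {refl r (alpha r i) | i. 1 \<le> i \<and> i \<le> r}" for s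
  proof -
    obtain i where i: "s = refl r (alpha r i)" "1 \<le> i" "i \<le> r" using s by blast
    show ?thesis
    proof (cases "i < r")
      case True
      then show ?thesis using signed_perm_refl_alpha_lt i by blast
    next
      case False
      then show ?thesis using i refl_alpha_last[of r] signed_perm_sign_flip by auto
    qed
  qed
  from signed_perm_gen_grp[OF this assms[unfolded weylW_def]] show ?thesis using that by blast
qed

lemma sign_flip_self: "m \<in> {1..r} \<Longrightarrow> sign_flip r m (eps2 1 m 1 m) = (\<lambda>n. - eps2 1 m 1 m n)"
  by (auto simp: sign_flip_def eps2_def eps_def fun_eq_iff)

lemma refl_alpha_self:
  assumes "1 \<le> i" "i \<le> r"
  shows "refl r (alpha r i) (alpha r i) = (\<lambda>n. - alpha r i n)"
proof (cases "i < r")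
  case True
  then have "refl r (alpha r i) (alpha r i) = eps2 1 (Suc i) (-1) i"
    using assms signed_perm_eps2[OF signed_perm_refl_alpha_lt] by (simp add: alpha_lt_eq_eps2)
  then show ?thesis using True by (simp add: alpha_lt_eq_eps2 eps2_def fun_eq_iff)
next
  case False
  then have "i = r" using assms by simp
  then show ?thesis using assms by (simp add: refl_alpha_last) (simp add: alpha_last_eq_eps2 sign_flip_self)
qed

lemma sign_flip_involutive: "sign_flip r m (sign_flip r m l) = restr r l"
  by (simp add: sign_flip_def restr_def fun_eq_iff)

lemma refl_alpha_involutive:
  assumes "1 \<le> i" "i \<le> r"
  shows "refl r (alpha r i) (refl r (alpha r i) l) = restr r l"
proof (cases "i < r")
  case True
  show ?thesis
  proof
    fix j
    have "transpose i (Suc i) j \<in> {1..r}" if "j \<in> {1..r}"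
      using transpose_Suc_range[OF assms(1) True that] .
    then show "refl r (alpha r i) (refl r (alpha r i) l) j = restr r l j"
      by (simp add: refl_alpha_lt[OF assms(1) True] restr_def)
  qed
next
  case False
  then show ?thesis using assms by (simp add: refl_alpha_last sign_flip_involutive)
qed

lemma refl_alpha_pos_root:
  assumes "1 \<le> i" "i \<le> r" "b \<in> pos_roots r" "b \<noteq> alpha r i"
  shows "refl r (alpha r i) b \<in> pos_roots r"
proof -
  obtain a e d where b: "1 \<le> a" "a \<le> d" "d \<le> r" "e = 1 \<or> (e = -1 \<and> a < d)"
    and b_eq: "b = eps2 1 a e d"
    using assms(3) by (rule pos_rootsE)
  show ?thesis
  proof (cases "i < r")
    case True
    have "transpose i (Suc i) a < transpose i (Suc i) d" if "e = -1"
      using b that assms(4) unfolding b_eq alpha_lt_eq_eps2[OF True] by (auto simp: transpose_def)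
    moreover have "transpose i (Suc i) a \<le> r" "transpose i (Suc i) d \<le> r"
      using transpose_Suc_range[OF assms(1) True] b by auto
    ultimately show ?thesis
      unfolding b_eq signed_perm_pos_root_iff[OF signed_perm_refl_alpha_lt[OF assms(1) True] b]
      using b by (auto simp: of_nat_diff)
  next
    case False
    then have "i = r" using assms by simp
    then have "\<not> (a = r \<and> d = r \<and> e = 1)" using assms(4) by (auto simp: b_eq alpha_last_eq_eps2)
    then show ?thesis
      unfolding b_eq \<open>i = r\<close> refl_alpha_last[OF order_trans[OF assms(1,2)]]
        signed_perm_pos_root_iff[OF signed_perm_sign_flip b]
      using b by (auto simp: of_nat_diff)
  qed
qed

lemma sign_flip_pos_root:
  assumes "b \<in> pos_roots r" "even (xP m b)" "b \<noteq> eps2 1 m 1 m"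
  shows "sign_flip r m b \<in> pos_roots r"
proof -
  obtain a e d where b: "1 \<le> a" "a \<le> d" "d \<le> r" "e = 1 \<or> (e = -1 \<and> a < d)"
    and b_eq: "b = eps2 1 a e d"
    using assms(1) by (rule pos_rootsE)
  have "a \<le> m \<longleftrightarrow> d \<le> m" using assms(2) b by (auto simp: b_eq xP_eps2 split: if_splits)
  then show ?thesis
    unfolding b_eq signed_perm_pos_root_iff[OF signed_perm_sign_flip b]
    using b assms(3) b_eq by (auto simp: of_nat_diff)
qed

lemma xP_sign_flip: "m \<le> r \<Longrightarrow> xP m (sign_flip r t l) = xP m l - (if t \<in> {1..m} then 2 * l t else 0)"
proof -
  assume "m \<le> r"
  then have "xP m (sign_flip r t l) = (\<Sum>j\<in>{1..m}. l j - 2 * (l j * eps t j))"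
    unfolding xP_def sign_flip_def by (intro sum.cong) (auto simp: eps_def)
  then show ?thesis by (simp add: xP_def sum_subtractf flip: sum_distrib_left)
qed

lemma xP_refl_alpha:
  assumes "1 \<le> i" "i \<le> r" "i \<noteq> m" "m < r"
  shows "xP m (refl r (alpha r i) l) = xP m l"
proof (cases "i < r")
  case True
  have "xP m (refl r (alpha r i) l) = (\<Sum>j\<in>{1..m}. l (transpose i (Suc i) j))"
    unfolding xP_def refl_alpha_lt[OF assms(1) True] using assms by (intro sum.cong) auto
  also have "\<dots> = (\<Sum>j\<in>transpose i (Suc i) ` {1..m}. l j)"
    by (simp add: sum.reindex)
  also have "transpose i (Suc i) ` {1..m} = {1..m}"
    using assms by (intro transpose_image_eq) auto
  finally show ?thesis by (simp add: xP_def)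
next
  case False
  then have "i = r" using assms by simp
  then show ?thesis using assms by (simp add: refl_alpha_last xP_sign_flip)
qed

lemma restr_refl: "restr r (refl r a l) = refl r a l"
  by (simp add: refl_def restr_def fun_eq_iff)

lemma refl_restr: "refl r a (restr r l) = refl r a l"
proof -
  have "dotp r (restr r l) a = dotp r l a" unfolding dotp_def restr_def by (rule sum.cong) auto
  then show ?thesis unfolding refl_def by (simp add: restr_def fun_eq_iff)
qed

lemma restr_gen_grp_refl:
  "u \<in> gen_grp r {refl r (alpha r i) | i. P i} \<Longrightarrow> restr r (u l) = u l"
proof (induction rule: gen_grp.induct)
  case unit
  then show ?case by (simp add: restr_def fun_eq_iff)
next
  case (step s w)
  then obtain i where "s = refl r (alpha r i)" by blast
  then show ?case by (simp add: restr_refl)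
qed

lemma gen_grp_refl_comp:
  assumes "w \<in> gen_grp r {refl r (alpha r i) | i. P i}" "u \<in> gen_grp r {refl r (alpha r i) | i. P i}"
  shows "w \<circ> u \<in> gen_grp r {refl r (alpha r i) | i. P i}"
  using assms(1)
proof induction
  case unit
  have "restr r \<circ> u = u" using restr_gen_grp_refl[OF assms(2)] by (simp add: fun_eq_iff)
  then show ?case using assms(2) by simp
next
  case (step s w)
  have "s \<circ> (w \<circ> u) \<in> gen_grp r {refl r (alpha r i) | i. P i}"
    by (rule gen_grp.step[OF step.hyps(1) step.IH])
  then show ?case by (simp only: o_assoc)
qed

lemma refl_alpha_gen_grp: "P i \<Longrightarrow> refl r (alpha r i) \<in> gen_grp r {refl r (alpha r j) | j. P j}"
proof -
  assume "P i"
  then have "refl r (alpha r i) \<circ> restr r \<in> gen_grp r {refl r (alpha r j) | j. P j}"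
    by (blast intro: gen_grp.step gen_grp.unit)
  moreover have "refl r (alpha r i) \<circ> restr r = refl r (alpha r i)"
    by (simp add: fun_eq_iff refl_restr)
  ultimately show ?thesis by simp
qed

lemma sign_flip_conj:
  assumes "1 \<le> m" "m < r"
  shows "sign_flip r m = refl r (alpha r m) \<circ> sign_flip r (Suc m) \<circ> refl r (alpha r m)"
proof (intro ext)
  fix l j
  show "sign_flip r m l j = (refl r (alpha r m) \<circ> sign_flip r (Suc m) \<circ> refl r (alpha r m)) l j"
    using assms unfolding o_apply refl_alpha_lt[OF assms] sign_flip_def
    by (cases "j = m"; cases "j = Suc m") auto
qed

lemma sign_flip_gen_grp:
  assumes "\<And>i. m \<le> i \<Longrightarrow> i \<le> r \<Longrightarrow> P i" "1 \<le> m" "m \<le> r"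
  shows "sign_flip r m \<in> gen_grp r {refl r (alpha r i) | i. P i}"
  using assms
proof (induction "r - m" arbitrary: m)
  case 0
  then have "m = r" by simp
  then show ?case using 0 refl_alpha_gen_grp[of P r r] by (simp add: refl_alpha_last)
next
  case (Suc x)
  then have "refl r (alpha r m) \<in> gen_grp r {refl r (alpha r i) | i. P i}"
    "sign_flip r (Suc m) \<in> gen_grp r {refl r (alpha r i) | i. P i}"
    by (simp_all add: refl_alpha_gen_grp)
  then show ?case using Suc.prems sign_flip_conj[of m r] Suc.hyps(2) by (simp add: gen_grp_refl_comp)
qed

lemma restr_weylW: "restr r \<in> weylW r"
  unfolding weylW_def by (rule gen_grp.unit)

lemma restr_weylL: "restr r \<in> weylL r k"
  unfolding weylL_def by (rule gen_grp.unit)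

lemma refl_alpha_weylW: "1 \<le> i \<Longrightarrow> i \<le> r \<Longrightarrow> refl r (alpha r i) \<in> weylW r"
  unfolding weylW_def by (rule refl_alpha_gen_grp) simp

lemma refl_alpha_weylL: "1 \<le> i \<Longrightarrow> i \<le> r \<Longrightarrow> i \<noteq> k \<Longrightarrow> refl r (alpha r i) \<in> weylL r k"
  unfolding weylL_def by (rule refl_alpha_gen_grp) simp

lemma sign_flip_weylW: "1 \<le> m \<Longrightarrow> m \<le> r \<Longrightarrow> sign_flip r m \<in> weylW r"
  unfolding weylW_def by (rule sign_flip_gen_grp) auto

lemma sign_flip_weylL: "k < m \<Longrightarrow> m \<le> r \<Longrightarrow> sign_flip r m \<in> weylL r k"
  unfolding weylL_def by (rule sign_flip_gen_grp) auto

lemma prod_minus_one_power_int: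
  "finite A \<Longrightarrow> (\<Prod>i\<in>A. (-1 :: 'a :: field) powi f i) = (-1) powi (\<Sum>i\<in>A. f i)"
  by (induction A rule: finite_induct) (simp_all add: power_int_add)

lemma torus_char_tau:
  assumes "s \<le> r"
  shows "torus_char r (tau s) l = (if even (xP s l) then 1 else -1)"
proof -
  have "torus_char r (tau s) l = (\<Prod>i\<in>{1..s}. (-1::complex) powi l i)"
    unfolding torus_char_def tau_def using assms by (intro prod.mono_neutral_cong_right) auto
  also have "\<dots> = (-1) powi xP s l"
    by (simp add: xP_def prod_minus_one_power_int)
  finally show ?thesis by (simp add: power_int_minus_left)
qed

lemma pos_rootsM_iff: "s \<le> r \<Longrightarrow> b \<in> pos_rootsM r s \<longleftrightarrow> b \<in> pos_roots r \<and> even (xP s b)"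
  by (simp add: pos_rootsM_def torus_char_tau)

lemma weylM_iff:
  "s \<le> r \<Longrightarrow> w \<in> weylM r s \<longleftrightarrow> w \<in> weylW r \<and> (\<forall>l. even (xP s (w l)) = even (xP s l))"
  by (auto simp: weylM_def torus_char_tau)

lemma restr_weylM: "s \<le> r \<Longrightarrow> restr r \<in> weylM r s"
  by (simp add: weylM_iff restr_weylW xP_restr)

lemma refl_alpha_weylM: "1 \<le> i \<Longrightarrow> i \<le> r \<Longrightarrow> i \<noteq> s \<Longrightarrow> s < r \<Longrightarrow> refl r (alpha r i) \<in> weylM r s"
  by (simp add: weylM_iff refl_alpha_weylW xP_refl_alpha)

lemma sign_flip_weylM: "1 \<le> m \<Longrightarrow> m \<le> r \<Longrightarrow> s \<le> r \<Longrightarrow> sign_flip r m \<in> weylM r s"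
  by (simp add: weylM_iff sign_flip_weylW xP_sign_flip)

lemma signed_perm_weylM_block:
  assumes "s \<le> r" "w \<in> weylM r s" "signed_perm r w \<pi> c" "a \<in> {1..r}"
  shows "\<pi> a \<le> s \<longleftrightarrow> a \<le> s"
proof -
  have "even (xP s (w (eps a))) = even (xP s (eps a))" using assms(1,2) weylM_iff by blast
  then show ?thesis
    using signed_perm_eps[OF assms(3,4)] signed_perm_sign[OF assms(3,4)]
      signed_perm_range[OF assms(3,4)] assms(4)
    by (auto simp: xP_mult xP_eps split: if_splits)
qed

text \<open>\<open>\<alpha>\<^sub>s\<close> is not a root of \<open>M\<close>, so minimality says nothing about it; instead \<open>W\<^sub>M\<close> preserves
  the block \<open>{1..s}\<close>.\<close>

lemma weylM_height_across_block:
  assumes "s \<le> r" "w \<in> weylM r s" "signed_perm r w \<pi> c" "1 \<le> a" "a \<le> s" "s < d" "d \<le> r"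
    and "0 < c a * int (Suc r - \<pi> a)"
  shows "c d * int (Suc r - \<pi> d) < c a * int (Suc r - \<pi> a)"
proof -
  have a: "a \<in> {1..r}" and d: "d \<in> {1..r}" using assms by auto
  have "\<pi> a \<le> s" "s < \<pi> d" "\<pi> d \<le> r"
    using signed_perm_weylM_block[OF assms(1-3) a] signed_perm_weylM_block[OF assms(1-3) d]
      signed_perm_range[OF assms(3) d] assms(5,6) by auto
  moreover have "c a = 1" using signed_perm_sign[OF assms(3) a] assms(8) by (auto simp: mult_less_0_iff)
  moreover have "c d \<in> {1, -1}" using signed_perm_sign[OF assms(3) d] .
  ultimately show ?thesis by (auto simp: of_nat_diff)
qed

section \<open>Minimal coset representatives\<close>

lemma lenM_comp_less:
  assumes "s \<le> r" and w: "signed_perm r w \<pi> c" and v: "v \<in> weylM r s"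
    and \<beta>: "\<beta> \<in> pos_rootsM r s" "w \<beta> \<in> neg_roots r"
    and v_\<beta>: "v \<beta> = (\<lambda>n. - \<beta> n)"
    and v_pos: "\<And>b. b \<in> pos_rootsM r s \<Longrightarrow> b \<noteq> \<beta> \<Longrightarrow> v b \<in> pos_roots r"
    and v_inv: "\<And>b. b \<in> pos_rootsM r s \<Longrightarrow> v (v b) = b"
  shows "lenM r s (w \<circ> v) < lenM r s w"
proof -
  let ?X = "pos_rootsM r s"
  have fin: "finite ?X" using finite_pos_roots unfolding pos_rootsM_def by simp
  have \<beta>_pos: "\<beta> \<in> pos_roots r" using \<beta>(1) pos_rootsM_iff[OF assms(1)] by blast
  have "{b \<in> ?X. w (v b) \<in> neg_roots r} \<subseteq> v ` ({b \<in> ?X. w b \<in> neg_roots r} - {\<beta>})"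
  proof
    fix b assume b: "b \<in> {b \<in> ?X. w (v b) \<in> neg_roots r}"
    then have b_pos: "b \<in> pos_roots r" "even (xP s b)" using pos_rootsM_iff[OF assms(1)] by auto
    have "b \<noteq> \<beta>"
    proof
      assume "b = \<beta>"
      then have "w (v b) \<in> pos_roots r" using v_\<beta> neg_rootsD[OF \<beta>(2)] signed_perm_uminus[OF w] by simp
      then show False using b pos_root_not_neg_root by blast
    qed
    then have "v b \<in> pos_roots r" using v_pos b by blast
    moreover have "even (xP s (v b))" using b_pos(2) v weylM_iff[OF assms(1)] by blast
    ultimately have "v b \<in> ?X" using pos_rootsM_iff[OF assms(1)] by blast
    moreover have "v b \<noteq> \<beta>"
      using v_inv[of b] b v_\<beta> neg_rootsI[OF \<beta>_pos] b_pos(1) pos_root_not_neg_root by force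
    ultimately have "v b \<in> {b \<in> ?X. w b \<in> neg_roots r} - {\<beta>}" using b by blast
    moreover have "b = v (v b)" using v_inv b by simp
    ultimately show "b \<in> v ` ({b \<in> ?X. w b \<in> neg_roots r} - {\<beta>})" by blast
  qed
  then have "lenM r s (w \<circ> v) \<le> card (v ` ({b \<in> ?X. w b \<in> neg_roots r} - {\<beta>}))"
    unfolding lenM_def using fin by (simp add: card_mono)
  also have "\<dots> \<le> card ({b \<in> ?X. w b \<in> neg_roots r} - {\<beta>})"
    using fin by (simp add: card_image_le)
  also have "\<dots> < lenM r s w"
    unfolding lenM_def using fin \<beta> by (intro card_Diff1_less) simp_all
  finally show ?thesis .
qed

lemma weylMQ_pos_of_refl:
  assumes "s \<le> r" "w \<in> weylMQ r s k" "signed_perm r w \<pi> c"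
    and \<beta>: "\<beta> \<in> pos_rootsM r s" and v: "v \<in> weylQ r s k"
    and "v \<beta> = (\<lambda>n. - \<beta> n)"
    and "\<And>b. b \<in> pos_rootsM r s \<Longrightarrow> b \<noteq> \<beta> \<Longrightarrow> v b \<in> pos_roots r"
    and "\<And>b. b \<in> pos_rootsM r s \<Longrightarrow> v (v b) = b"
  shows "w \<beta> \<in> pos_roots r"
proof (rule ccontr)
  assume "w \<beta> \<notin> pos_roots r"
  then have "w \<beta> \<in> neg_roots r"
    using signed_perm_root[OF assms(3)] \<beta> pos_rootsM_def by blast
  then have "lenM r s (w \<circ> v) < lenM r s w"
    using v assms unfolding weylQ_def by (intro lenM_comp_less) auto
  moreover have "lenM r s w \<le> lenM r s (w \<circ> v)" using assms(2) v unfolding weylMQ_def by blast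
  ultimately show False by simp
qed

lemma weylMQ_simple_root_pos:
  assumes "s < r" "w \<in> weylMQ r s k" "signed_perm r w \<pi> c" "1 \<le> i" "i \<le> r" "i \<noteq> k" "i \<noteq> s"
  shows "w (alpha r i) \<in> pos_roots r"
proof (rule weylMQ_pos_of_refl[OF _ assms(2,3)])
  show "alpha r i \<in> pos_rootsM r s"
    using assms xP_alpha[of s r i] alpha_pos_root pos_rootsM_iff[of s r] by simp
  show "refl r (alpha r i) \<in> weylQ r s k"
    unfolding weylQ_def using assms refl_alpha_weylM refl_alpha_weylL by blast
  show "refl r (alpha r i) b \<in> pos_roots r" if "b \<in> pos_rootsM r s" "b \<noteq> alpha r i" for b
    using that assms refl_alpha_pos_root pos_rootsM_def by blast
  show "refl r (alpha r i) (refl r (alpha r i) b) = b" if "b \<in> pos_rootsM r s" for b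
    using that assms refl_alpha_involutive restr_pos_root pos_rootsM_def by auto
qed (use assms refl_alpha_self in auto)

lemma weylMQ_long_root_pos:
  assumes "k < s" "s < r" "w \<in> weylMQ r s k" "signed_perm r w \<pi> c"
  shows "w (eps2 1 s 1 s) \<in> pos_roots r"
proof (rule weylMQ_pos_of_refl[OF _ assms(3,4)])
  show "eps2 1 s 1 s \<in> pos_rootsM r s"
    using assms pos_rootsI[of s s r 1] pos_rootsM_iff[of s r] by (simp add: xP_eps2)
  show "sign_flip r s \<in> weylQ r s k"
    unfolding weylQ_def using assms sign_flip_weylM sign_flip_weylL by simp
  show "sign_flip r s b \<in> pos_roots r" if "b \<in> pos_rootsM r s" "b \<noteq> eps2 1 s 1 s" for b
    using that assms sign_flip_pos_root pos_rootsM_iff[of s r] by simp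
  show "sign_flip r s (sign_flip r s b) = b" if "b \<in> pos_rootsM r s" for b
    using that sign_flip_involutive restr_pos_root pos_rootsM_def by auto
qed (use assms sign_flip_self in auto)

text \<open>For \<open>H a = \<langle>\<rho>, w \<epsilon>\<^sub>a\<rangle>\<close>, \<open>step\<close>, \<open>last\<close> and \<open>mid\<close> say that \<open>w\<close> keeps the simple roots of
  \<open>L \<inter> M\<close> positive, and the conclusions that it keeps \<open>R\<^sub>L\<^sup>+\<close> positive.\<close>

lemma block_decreasing:
  fixes H :: "nat \<Rightarrow> int"
  assumes "k \<le> s" "s < r"
    and step: "\<And>i. 1 \<le> i \<Longrightarrow> i < r \<Longrightarrow> i \<noteq> k \<Longrightarrow> i \<noteq> s \<Longrightarrow> H (Suc i) < H i"
    and last: "0 < H r" and mid: "k < s \<Longrightarrow> 0 < H s"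
    and cross: "\<And>a d. 1 \<le> a \<Longrightarrow> a \<le> s \<Longrightarrow> s < d \<Longrightarrow> d \<le> r \<Longrightarrow> 0 < H a \<Longrightarrow> H d < H a"
  shows block_decreasing_pos: "k < a \<Longrightarrow> a \<le> r \<Longrightarrow> 0 < H a"
    and block_decreasing_less: "1 \<le> a \<Longrightarrow> a < d \<Longrightarrow> d \<le> r \<Longrightarrow> (a \<le> k \<longleftrightarrow> d \<le> k) \<Longrightarrow> H d < H a"
proof -
  have chain: "H d < H a" if "1 \<le> a" "a < d" "d \<le> r" "\<forall>i\<in>{a..<d}. i \<noteq> k \<and> i \<noteq> s" for a d
    using lift_Suc_mono_less_ivl[of "{i. 1 \<le> i \<and> i < r \<and> i \<noteq> k \<and> i \<noteq> s}" "\<lambda>i. - H i" a d]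
      step that by fastforce
  have pos: "0 < H a" if "k < a" "a \<le> r" for a
  proof (cases "s < a")
    case True
    then show ?thesis using chain[of a r] last that by (cases "a = r") auto
  next
    case False
    then show ?thesis using chain[of a s] mid that assms(2) by (cases "a = s") auto
  qed
  then show "k < a \<Longrightarrow> a \<le> r \<Longrightarrow> 0 < H a" .
  show "H d < H a" if "1 \<le> a" "a < d" "d \<le> r" "a \<le> k \<longleftrightarrow> d \<le> k"
  proof (cases "d \<le> s \<or> s < a")
    case True
    then show ?thesis using chain[of a d] that assms(1) by fastforce
  next
    case False
    then show ?thesis using cross[of a d] pos[of a] that assms(1) by auto
  qed
qed

lemma weylMQ_pos_rootsL:
  assumes "1 \<le> k" "k \<le> s" "s < r" and w: "w \<in> weylMQ r s k" and b: "b \<in> pos_rootsL r k"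
  shows "w b \<in> pos_roots r"
proof -
  have wM: "w \<in> weylM r s" using w unfolding weylMQ_def by blast
  then obtain \<pi> c where sp: "signed_perm r w \<pi> c"
    using signed_perm_weylW unfolding weylM_def by blast
  define H where "H a = c a * int (Suc r - \<pi> a)" for a
  have pos_iff: "w (eps2 1 a e d) \<in> pos_roots r \<longleftrightarrow> 0 < H a + e * H d"
    if "1 \<le> a" "a \<le> d" "d \<le> r" "e = 1 \<or> (e = -1 \<and> a < d)" for a e d
    unfolding H_def using signed_perm_pos_root_iff[OF sp that] .
  have step: "H (Suc i) < H i" if "1 \<le> i" "i < r" "i \<noteq> k" "i \<noteq> s" for i
    using weylMQ_simple_root_pos[OF assms(3) w sp, of i] pos_iff[of i "Suc i" "-1"] that
    by (simp add: alpha_lt_eq_eps2)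
  have last: "0 < H r"
    using weylMQ_simple_root_pos[OF assms(3) w sp, of r] pos_iff[of r r 1] assms(1-3)
    by (simp add: alpha_last_eq_eps2)
  have mid: "0 < H s" if "k < s"
    using weylMQ_long_root_pos[OF that assms(3) w sp] pos_iff[of s s 1] assms(1-3) by simp
  have cross: "H d < H a" if "1 \<le> a" "a \<le> s" "s < d" "d \<le> r" "0 < H a" for a d
    using weylM_height_across_block[OF less_imp_le[OF assms(3)] wM sp that(1-4) that(5)[unfolded H_def]]
    unfolding H_def .
  note H_pos = block_decreasing_pos[OF assms(2,3) step last mid cross]
    and H_less = block_decreasing_less[OF assms(2,3) step last mid cross]
  obtain a e d where ad: "1 \<le> a" "a \<le> d" "d \<le> r" "e = 1 \<or> (e = -1 \<and> a < d)"
    and b_eq: "b = eps2 1 a e d"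
    using b unfolding pos_rootsL_def by (blast elim: pos_rootsE)
  have xP_b: "xP k b = 0" using b unfolding pos_rootsL_def by simp
  consider (plus) "e = 1" | (minus) "e = -1" "a < d" using ad(4) by blast
  then have "0 < H a + e * H d"
  proof cases
    case plus
    then have "k < a" "k < d" using xP_b ad by (auto simp: b_eq xP_eps2 split: if_splits)
    then show ?thesis using plus ad H_pos[of a] H_pos[of d] by simp
  next
    case minus
    then have "a \<le> k \<longleftrightarrow> d \<le> k" using xP_b ad by (auto simp: b_eq xP_eps2 split: if_splits)
    then show ?thesis using minus ad H_less[of a d] by simp
  qed
  then show ?thesis unfolding b_eq using pos_iff[OF ad] by simp
qed

section \<open>Dimensions of the cells\<close>

lemma bij_betw_filter:
  assumes "bij_betw v X X"
  shows "bij_betw v {x \<in> X. P (v x)} {x \<in> X. P x}"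
proof -
  have "v ` {x \<in> X. P (v x)} = {x \<in> X. P x}"
  proof
    show "v ` {x \<in> X. P (v x)} \<subseteq> {x \<in> X. P x}" using assms by (auto simp: bij_betw_def)
    show "{x \<in> X. P x} \<subseteq> v ` {x \<in> X. P (v x)}"
    proof
      fix y assume "y \<in> {x \<in> X. P x}"
      moreover obtain x where "x \<in> X" "y = v x" using assms calculation by (auto simp: bij_betw_def)
      ultimately show "y \<in> v ` {x \<in> X. P (v x)}" by blast
    qed
  qed
  moreover have "inj_on v {x \<in> X. P (v x)}" using assms by (auto simp: bij_betw_def intro: inj_on_subset)
  ultimately show ?thesis by (simp add: bij_betw_def)
qed

lemma refl_alpha_bij_betw_levi:
  assumes "k < r" "1 \<le> i" "i \<le> r" "i \<noteq> k"
  shows "bij_betw (refl r (alpha r i)) (pos_roots r - pos_rootsL r k) (pos_roots r - pos_rootsL r k)"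
proof -
  have "refl r (alpha r i) b \<in> pos_roots r - pos_rootsL r k" if "b \<in> pos_roots r - pos_rootsL r k" for b
  proof -
    have "b \<noteq> alpha r i" using that assms xP_alpha[of k r i] by (auto simp: pos_rootsL_def)
    then show ?thesis
      using that assms refl_alpha_pos_root xP_refl_alpha[of i r k] by (auto simp: pos_rootsL_def)
  qed
  then have maps: "refl r (alpha r i) ` (pos_roots r - pos_rootsL r k) \<subseteq> pos_roots r - pos_rootsL r k"
    by blast
  have inv: "\<forall>b\<in>pos_roots r - pos_rootsL r k. refl r (alpha r i) (refl r (alpha r i) b) = b"
    using assms refl_alpha_involutive restr_pos_root by auto
  show ?thesis using bij_betw_byWitness[OF inv inv maps maps] .
qed

lemma weylL_bij_betw_levi:
  assumes "k < r" "v \<in> weylL r k"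
  shows "bij_betw v (pos_roots r - pos_rootsL r k) (pos_roots r - pos_rootsL r k)"
  using assms(2) unfolding weylL_def
proof induction
  case unit
  show ?case by (rule bij_betw_cong[THEN iffD2, OF _ bij_betw_id]) (simp add: restr_pos_root)
next
  case (step s w)
  then obtain i where i: "s = refl r (alpha r i)" "1 \<le> i" "i \<le> r" "i \<noteq> k" by blast
  show ?case
    unfolding i(1) using bij_betw_trans[OF step.IH refl_alpha_bij_betw_levi[OF assms(1) i(2-4)]] .
qed

lemma pos_rootsM_diff_pos_rootsL:
  "s \<le> r \<Longrightarrow> pos_rootsM r s - pos_rootsL r k = {b \<in> pos_roots r - pos_rootsL r k. even (xP s b)}"
  using pos_rootsM_iff by auto

lemma weylQ_bij_betw_levi:
  assumes "k < r" "s \<le> r" "v \<in> weylQ r s k"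
  shows "bij_betw v (pos_rootsM r s - pos_rootsL r k) (pos_rootsM r s - pos_rootsL r k)"
proof -
  have "even (xP s (v b)) = even (xP s b)" for b
    using assms(2,3) weylM_iff unfolding weylQ_def by blast
  then show ?thesis
    using bij_betw_filter[OF weylL_bij_betw_levi, of k r v "\<lambda>b. even (xP s b)"] assms
    by (simp add: pos_rootsM_diff_pos_rootsL weylQ_def)
qed

lemma dim_cell_eq:
  assumes "k < r" "w \<circ> restr r = w" "\<forall>b\<in>pos_rootsL r k. w b \<notin> neg_roots r"
  shows "dim_cell r k w = card {b \<in> pos_roots r - pos_rootsL r k. w b \<in> neg_roots r}"
  unfolding dim_cell_def
proof (rule Least_equality)
  let ?A = "pos_roots r - pos_rootsL r k"
  have "len r w = card {b \<in> ?A. w b \<in> neg_roots r}"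
    unfolding len_def using assms(3) by (metis Diff_iff)
  then show "\<exists>v\<in>weylL r k. card {b \<in> ?A. w b \<in> neg_roots r} = len r (w \<circ> v)"
    using restr_weylL assms(2) by metis
  show "card {b \<in> ?A. w b \<in> neg_roots r} \<le> y" if y: "\<exists>v\<in>weylL r k. y = len r (w \<circ> v)" for y
  proof -
    obtain v where v: "v \<in> weylL r k" "y = len r (w \<circ> v)" using y by blast
    have "card {b \<in> ?A. w b \<in> neg_roots r} = card {b \<in> ?A. w (v b) \<in> neg_roots r}"
      using bij_betw_same_card[OF bij_betw_filter[OF weylL_bij_betw_levi[OF assms(1) v(1)]]]
      by (rule sym)
    also have "\<dots> \<le> y"
      unfolding v(2) len_def using finite_pos_roots by (intro card_mono) auto
    finally show ?thesis .
  qed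
qed

lemma dim_cellM_eq:
  assumes "k < r" "s \<le> r" "w \<circ> restr r = w" "\<forall>b\<in>pos_rootsL r k. w b \<notin> neg_roots r"
  shows "dim_cellM r s k w = card {b \<in> pos_rootsM r s - pos_rootsL r k. w b \<in> neg_roots r}"
  unfolding dim_cellM_def
proof (rule Least_equality)
  let ?B = "pos_rootsM r s - pos_rootsL r k"
  have "lenM r s w = card {b \<in> ?B. w b \<in> neg_roots r}"
    unfolding lenM_def using assms(4) by (metis Diff_iff)
  moreover have "restr r \<in> weylQ r s k" using restr_weylL restr_weylM assms(2) by (simp add: weylQ_def)
  ultimately show "\<exists>v\<in>weylQ r s k. card {b \<in> ?B. w b \<in> neg_roots r} = lenM r s (w \<circ> v)"
    using assms(3) by metis
  show "card {b \<in> ?B. w b \<in> neg_roots r} \<le> y" if y: "\<exists>v\<in>weylQ r s k. y = lenM r s (w \<circ> v)" for y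
  proof -
    obtain v where v: "v \<in> weylQ r s k" "y = lenM r s (w \<circ> v)" using y by blast
    have "card {b \<in> ?B. w b \<in> neg_roots r} = card {b \<in> ?B. w (v b) \<in> neg_roots r}"
      using bij_betw_same_card[OF bij_betw_filter[OF weylQ_bij_betw_levi[OF assms(1,2) v(1)]]]
      by (rule sym)
    also have "\<dots> \<le> y"
      unfolding v(2) lenM_def using finite_pos_roots by (intro card_mono) (auto simp: pos_rootsM_def)
    finally show ?thesis .
  qed
qed

lemma codim_cell_eq:
  assumes "k < r" "signed_perm r w \<pi> c" "\<forall>b\<in>pos_rootsL r k. w b \<in> pos_roots r"
  shows "codim_cell r k w = card {b \<in> pos_roots r - pos_rootsL r k. w b \<in> pos_roots r}"
proof -
  define A where "A = pos_roots r - pos_rootsL r k"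
  have "w \<circ> restr r = w" using signed_perm_restr_eq[OF assms(2)] by (simp add: fun_eq_iff)
  then have dim: "dim_cell r k w = card {b \<in> A. w b \<in> neg_roots r}"
    unfolding A_def using assms(1,3) pos_root_not_neg_root by (intro dim_cell_eq) auto
  have "codim_cell r k w = card A - card {b \<in> A. w b \<in> neg_roots r}"
    unfolding codim_cell_def dim A_def ..
  also have "\<dots> = card (A - {b \<in> A. w b \<in> neg_roots r})"
    using finite_pos_roots by (intro card_Diff_subset[symmetric]) (auto simp: A_def)
  also have "A - {b \<in> A. w b \<in> neg_roots r} = {b \<in> A. w b \<in> pos_roots r}"
    unfolding A_def using signed_perm_root[OF assms(2)] pos_root_not_neg_root by blast
  finally show ?thesis unfolding A_def .
qed

lemma codim_cellM_eq:
  assumes "k < r" "s \<le> r" "signed_perm r w \<pi> c" "\<forall>b\<in>pos_rootsL r k. w b \<in> pos_roots r"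
  shows "codim_cellM r s k w = card {b \<in> pos_rootsM r s - pos_rootsL r k. w b \<in> pos_roots r}"
proof -
  define B where "B = pos_rootsM r s - pos_rootsL r k"
  have "w \<circ> restr r = w" using signed_perm_restr_eq[OF assms(3)] by (simp add: fun_eq_iff)
  then have dim: "dim_cellM r s k w = card {b \<in> B. w b \<in> neg_roots r}"
    unfolding B_def using assms(1,2,4) pos_root_not_neg_root by (intro dim_cellM_eq) auto
  have "codim_cellM r s k w = card B - card {b \<in> B. w b \<in> neg_roots r}"
    unfolding codim_cellM_def dim B_def ..
  also have "\<dots> = card (B - {b \<in> B. w b \<in> neg_roots r})"
    using finite_pos_roots by (intro card_Diff_subset[symmetric]) (auto simp: B_def pos_rootsM_def)
  also have "B - {b \<in> B. w b \<in> neg_roots r} = {b \<in> B. w b \<in> pos_roots r}"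
    unfolding B_def using signed_perm_root[OF assms(3)] pos_root_not_neg_root
    by (auto simp: pos_rootsM_def)
  finally show ?thesis unfolding B_def .
qed

lemma codim_cell_diff:
  assumes "k < r" "s \<le> r" "signed_perm r w \<pi> c" "\<forall>b\<in>pos_rootsL r k. w b \<in> pos_roots r"
  shows "int (codim_cell r k w) - int (codim_cellM r s k w)
           = int (card {b \<in> pos_roots r - pos_rootsL r k. w b \<in> pos_roots r \<and> odd (xP s b)})"
proof -
  define P where "P = {b \<in> pos_roots r - pos_rootsL r k. w b \<in> pos_roots r}"
  have "codim_cell r k w = card P" unfolding P_def using codim_cell_eq[OF assms(1,3,4)] .
  also have "P = {b \<in> P. even (xP s b)} \<union> {b \<in> P. odd (xP s b)}" by blast
  also have "card \<dots> = card {b \<in> P. even (xP s b)} + card {b \<in> P. odd (xP s b)}"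
    using finite_pos_roots by (intro card_Un_disjoint) (auto simp: P_def)
  also have "{b \<in> P. even (xP s b)} = {b \<in> pos_rootsM r s - pos_rootsL r k. w b \<in> pos_roots r}"
    unfolding P_def pos_rootsM_diff_pos_rootsL[OF assms(2)] by blast
  also have "card \<dots> = codim_cellM r s k w" using codim_cellM_eq[OF assms] ..
  finally show ?thesis unfolding P_def by (simp add: conj_assoc)
qed

lemma xP_chi_diff:
  assumes "s \<le> r"
  shows "xP k (\<lambda>j. chi r k w j - chiM r s k w j)
           = (\<Sum>b \<in> {b \<in> pos_roots r - pos_rootsL r k. w b \<in> pos_roots r \<and> odd (xP s b)}. xP k b)"
proof -
  define P where "P = {b \<in> pos_roots r - pos_rootsL r k. w b \<in> pos_roots r}"
  define Q where "Q = {b \<in> P. even (xP s b)}"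
  have fin: "finite P" using finite_pos_roots by (simp add: P_def)
  have "chi r k w = (\<lambda>j. \<Sum>b\<in>P. b j)" unfolding chi_def P_def ..
  moreover have "chiM r s k w = (\<lambda>j. \<Sum>b\<in>Q. b j)"
    unfolding chiM_def Q_def P_def pos_rootsM_diff_pos_rootsL[OF assms] by (intro ext sum.cong) auto
  moreover have "Q \<subseteq> P" unfolding Q_def by blast
  ultimately have "(\<lambda>j. chi r k w j - chiM r s k w j) = (\<lambda>j. \<Sum>b\<in>P - Q. b j)"
    by (simp add: sum_diff[OF fin \<open>Q \<subseteq> P\<close>])
  also have "P - Q = {b \<in> pos_roots r - pos_rootsL r k. w b \<in> pos_roots r \<and> odd (xP s b)}"
    unfolding P_def Q_def by auto
  finally show ?thesis by (simp add: xP_sum)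
qed

lemma xP_eq_one:
  assumes "k \<le> s" "b \<in> pos_roots r - pos_rootsL r k" "odd (xP s b)"
  shows "xP k b = 1"
proof -
  obtain a e d where "1 \<le> a" "a \<le> d" "d \<le> r" "e = 1 \<or> (e = -1 \<and> a < d)" "b = eps2 1 a e d"
    using assms(2) by (blast elim: pos_rootsE)
  moreover have "xP k b \<noteq> 0" using assms(2) by (simp add: pos_rootsL_def)
  ultimately show ?thesis using assms(1,3) by (auto simp: xP_eps2 split: if_splits)
qed

theorem mainTheorem6:
  fixes r s k :: nat and w :: "weight \<Rightarrow> weight"
  assumes "1 \<le> k" and "k \<le> s" and "s < r"
    and "w \<in> weylMQ r s k"
  shows "int (codim_cell r k w) - int (codim_cellM r s k w)
           = xP k (\<lambda>j. chi r k w j - chiM r s k w j)"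
proof -
  obtain \<pi> c where w: "signed_perm r w \<pi> c"
    using assms(4) signed_perm_weylW unfolding weylMQ_def weylM_def by blast
  have levi: "\<forall>b\<in>pos_rootsL r k. w b \<in> pos_roots r"
    using weylMQ_pos_rootsL[OF assms] by blast
  define D where "D = {b \<in> pos_roots r - pos_rootsL r k. w b \<in> pos_roots r \<and> odd (xP s b)}"
  have one: "xP k b = 1" if "b \<in> D" for b
    using xP_eq_one[OF assms(2)] that unfolding D_def by blast
  have "int (codim_cell r k w) - int (codim_cellM r s k w) = int (card D)"
    unfolding D_def using codim_cell_diff[OF _ _ w levi] assms(2,3) by simp
  also have "\<dots> = (\<Sum>b\<in>D. xP k b)"
    by (simp add: one)
  also have "\<dots> = xP k (\<lambda>j. chi r k w j - chiM r s k w j)"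
    unfolding D_def using xP_chi_diff[of s r k w] assms(3) by simp
  finally show ?thesis .
qed

end
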